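(* Let $G=(\mathcal V,\mathcal E)$ be an ADT network, possibly containing cycles, in which every link has unit delay. Let $A(D)$, $B(D)$ and $F$ be the encoding, decoding and adjacency matrices, where the entries $\alpha_{(i,e_j)}(D)$ and $\epsilon_{(e_i,(T_j,k))}(D)$ are constants or rational functions of $D$. Then the system matrix $M(D)$ relating the source power series to the destination power series, $\mathcal Z(D)=\mathcal X(S,D)M(D)$, is given by $$M(D)=A(D)\,(I-DF)^{-1}\,B(D)^T .$$
   Context: ADT network with delay. Supernodes $V$ have input ports $I(V)$ and output ports $O(V)$. Edges go from output ports to input ports of other supernodes, and the directed graph may have cycles. Symbols lie in a finite field $\mathbb F_q$ and time is $t=0,1,2,\dots$. Each link has the same unit delay. Processes are written as power series in the delay variable $D$: $$X(S,i,D)=\sum_t X_t(S,i)D^t,\qquad Z(T,k,D)=\sum_t Z_t(T,k)D^t,\qquad Y(e,D)=\sum_tY_t(e)D^t.$$ The network evolves as $$Y_{t+1}(e)=\sum_{e'\in I(V)}\beta_{(e',e)}Y_t(e')+\sum_i\alpha_{(i,e)}X_t(S,i)\quad\text{for } e\in O(V),$$ where the source term is present only at the source $S$. Input ports receive the $\mathbb F_q$-sum of the symbols on incoming edges, and an output port sends the same symbol on all its outgoing edges. Destinations output $$Z_{t+1}(T,k)=\sum_{e'\in I(T)}\epsilon_{(e',(T,k))}Y_t(e').$$ Index the ports $e_1,\dots,e_m$. - $F$ is the $m\times m$ matrix with $F_{i,j}=1$ if $(e_i,e_j)\in\mathcal E$, $F_{i,j}=\beta_{(e_i,e_j)}$ if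 $e_i\in I(V)$ and $e_j\in O(V)$ for the same supernode $V$, and $F_{i,j}=0$ otherwise. - $A(D)_{i,j}=\alpha_{(i,e_j)}(D)$ if $e_j\in O(S)$, and $0$ otherwise. - $B(D)$ has rows indexed by the destination outputs $(T_j,k)$, with entry $\epsilon_{(e_i,(T_j,k))}(D)$ in column $e_i$ if $e_i\in I(T_j)$, and $0$ otherwise. Matrices are taken over the field $\mathbb F_q(D)$ of rational functions. *)

theory Defs
  imports "HOL-Analysis.Analysis" "HOL-Computational_Algebra.Formal_Laurent_Series"
begin

(* The delay variable D, as an element of the field of formal Laurent series over F_q,
   which contains F_q(D) (rational functions) and the power series F_q[[D]]. *)
abbreviation delayD :: "'a::field fls" where "delayD \<equiv> fls_X"

definition is_rational_fn :: "'a::field fls \<Rightarrow> bool" where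
  "is_rational_fn f \<longleftrightarrow> (\<exists>p q. q \<noteq> 0 \<and>
      f = fps_to_fls (fps_of_poly p) / fps_to_fls (fps_of_poly q))"

(* ADT network on a finite set of ports (type 'p).
   node e = supernode owning port e; is_in e = e is an input port (else an output port);
   E = set of links, each going from an output port to an input port of another supernode. *)
definition adt_network :: "('p \<times> 'p) set \<Rightarrow> ('p \<Rightarrow> 'v) \<Rightarrow> ('p \<Rightarrow> bool) \<Rightarrow> bool" where
  "adt_network E node is_in \<longleftrightarrow>
     (\<forall>(e, e') \<in> E. \<not> is_in e \<and> is_in e' \<and> node e \<noteq> node e')"

definition adj_matrix :: "('p \<times> 'p) set \<Rightarrow> ('p \<Rightarrow> 'v) \<Rightarrow> ('p \<Rightarrow> bool)
    \<Rightarrow> ('p \<Rightarrow> 'p \<Rightarrow> 'a::field) \<Rightarrow> 'a fls ^'p^'p" where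
  "adj_matrix E node is_in \<beta> = (\<chi> i j.
     if (i, j) \<in> E then 1
     else if is_in i \<and> \<not> is_in j \<and> node i = node j then fls_const (\<beta> i j)
     else 0)"

definition mat_scale :: "'a::times \<Rightarrow> 'a^'n^'m \<Rightarrow> 'a^'n^'m" where
  "mat_scale c M = (\<chi> i j. c * M $ i $ j)"

definition system_matrix :: "'a::field fls ^'p^'i \<Rightarrow> 'a fls ^'p^'p \<Rightarrow> 'a fls ^'p^'k
    \<Rightarrow> 'a fls ^'k^'i" where
  "system_matrix A F B = A ** matrix_inv (mat 1 - mat_scale delayD F) ** transpose B"

end

theory Submission
  imports Defs
begin

text \<open>
The unit delay on every link makes the network causal: the port processes satisfy
\<open>y = x A + D y F\<close>, i.e. \<open>y (I - D F) = x A\<close>, and \<open>z = y B\<^sup>T\<close>. The only real point is that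
\<open>I - D F\<close> is invertible over the Laurent series. If \<open>v = D v F\<close> with \<open>v \<noteq> 0\<close> and \<open>F\<close> has power
series entries, look at a component of \<open>v\<close> of minimal subdegree \<open>N\<close>: the right-hand side
vanishes in degree \<open>N\<close>, because \<open>v F\<close> vanishes below \<open>N\<close>, a contradiction. Cycles in the
network are therefore harmless.
\<close>

lemma vector_matrix_mult_mat_scale:
  fixes F :: "'a::comm_semiring_1^'n::finite^'m"
  shows "x v* mat_scale c F = c *s (x v* F)"
  by (simp add: vec_eq_iff vector_matrix_mult_def mat_scale_def sum_distrib_left mult_ac)

lemma vector_matrix_mult_one_minus_mat_scale:
  fixes F :: "'a::comm_ring_1^'n::finite^'n"
  shows "x v* (mat 1 - mat_scale c F) = x - c *s (x v* F)"
  by (simp add: vector_matrix_mult_diff_rdistrib vector_matrix_mult_mat_scale)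

lemma invertible_if_left_kernel_trivial:
  fixes M :: "'a::field^'n::finite^'n"
  assumes ker: "\<And>x. x v* M = 0 \<Longrightarrow> x = 0"
  shows "invertible M"
proof -
  have "inj ((*v) (transpose M))"
  proof (rule injI)
    fix u w assume "transpose M *v u = transpose M *v w"
    then have "(u - w) v* M = 0" by (simp add: vector_matrix_mult_diff_distrib)
    then show "u = w" using ker[of "u - w"] by simp
  qed
  then have "det (transpose M) \<noteq> 0"
    using det_nz_iff_inj_gen[OF matrix_vector_mul_linear_gen, of "transpose M"]
    by simp
  then show ?thesis by (simp add: invertible_det_nz)
qed

lemma fls_X_fixpoint_eq_zero:
  fixes F :: "'a::field fls^'n::finite^'n"
  assumes causal: "\<And>i j. 0 \<le> fls_subdegree (F $ i $ j)"
    and fixpoint: "v = fls_X *s (v v* F)"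
  shows "v = 0"
proof (rule ccontr)
  assume "v \<noteq> 0"
  define degs where "degs = {fls_subdegree (v $ e) | e. v $ e \<noteq> 0}"
  define N where "N = Min degs"
  have "finite degs" "degs \<noteq> {}"
    using \<open>v \<noteq> 0\<close> by (auto simp: degs_def vec_eq_iff)
  then have "N \<in> degs" unfolding N_def by (rule Min_in)
  then obtain e0 where e0: "v $ e0 \<noteq> 0" "fls_subdegree (v $ e0) = N"
    by (auto simp: degs_def)
  have "N \<le> fls_subdegree (v $ e)" if "v $ e \<noteq> 0" for e
    using \<open>finite degs\<close> that by (auto simp: N_def degs_def intro: Min_le)
  then have "fls_nth (v $ e * F $ e $ e0) (N - 1) = 0" for e
  proof (cases "v $ e = 0")
    case False
    then show ?thesis
      using \<open>v $ e \<noteq> 0 \<Longrightarrow> N \<le> fls_subdegree (v $ e)\<close> causal[of e e0]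
      by (intro fls_times_nth_eq0) simp
  qed simp
  then have "fls_nth ((v v* F) $ e0) (N - 1) = 0"
    by (simp add: vector_matrix_mult_def fls_nth_sum)
  then have "fls_nth (v $ e0) N = 0"
    by (subst fixpoint) (simp add: fls_X_times_conv_shift)
  with e0 show False by (metis nth_fls_subdegree_nonzero)
qed

lemma invertible_one_minus_fls_X_mat_scale:
  fixes F :: "'a::field fls^'n::finite^'n"
  assumes "\<And>i j. 0 \<le> fls_subdegree (F $ i $ j)"
  shows "invertible (mat 1 - mat_scale fls_X F)"
proof (rule invertible_if_left_kernel_trivial)
  fix v assume "v v* (mat 1 - mat_scale fls_X F) = 0"
  then have "v = fls_X *s (v v* F)"
    by (simp add: vector_matrix_mult_one_minus_mat_scale)
  with assms show "v = 0" by (rule fls_X_fixpoint_eq_zero)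
qed

lemma subdegree_adj_matrix_nonneg: "0 \<le> fls_subdegree (adj_matrix E node is_in \<beta> $ i $ j)"
  by (simp add: adj_matrix_def)

lemma vector_matrix_mult_matrix_inv_eq:
  fixes M :: "'a::field^'n::finite^'n"
  assumes "invertible M" and "y v* M = b"
  shows "y = b v* matrix_inv M"
proof -
  have "M ** matrix_inv M = mat 1"
    using someI_ex[OF \<open>invertible M\<close>[unfolded invertible_def]]
    unfolding matrix_inv_def by blast
  then have "y = y v* (M ** matrix_inv M)" by simp
  also have "\<dots> = b v* matrix_inv M"
    using \<open>y v* M = b\<close> by (simp flip: vector_matrix_mul_assoc)
  finally show ?thesis .
qed

theorem theorem11:
  fixes E :: "('p::finite \<times> 'p) set"
    and node :: "'p \<Rightarrow> 'v"
    and is_in :: "'p \<Rightarrow> bool"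
    and \<beta> :: "'p \<Rightarrow> 'p \<Rightarrow> 'a::{field, finite}"
    and S :: 'v
    and T :: "'k::finite \<Rightarrow> 'v"
    and A :: "'a fls ^'p^'i::finite"
    and B :: "'a fls ^'p^'k"
    and X :: "'i \<Rightarrow> 'a fps"
    and Y :: "'p \<Rightarrow> 'a fps"
    and Z :: "'k \<Rightarrow> 'a fps"
  assumes net: "adt_network E node is_in"
    and A_supp: "\<And>i e. \<not> (\<not> is_in e \<and> node e = S) \<Longrightarrow> A $ i $ e = 0"
    and B_supp: "\<And>k e. \<not> (is_in e \<and> node e = T k) \<Longrightarrow> B $ k $ e = 0"
    and A_rat: "\<And>i e. is_rational_fn (A $ i $ e)"
    and B_rat: "\<And>k e. is_rational_fn (B $ k $ e)"
    and dynY: "\<And>e. fps_to_fls (Y e) =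
        delayD * (\<Sum>e'\<in>UNIV. adj_matrix E node is_in \<beta> $ e' $ e * fps_to_fls (Y e'))
        + (\<Sum>i\<in>UNIV. A $ i $ e * fps_to_fls (X i))"
    and dynZ: "\<And>k. fps_to_fls (Z k) = (\<Sum>e\<in>UNIV. B $ k $ e * fps_to_fls (Y e))"
  shows "(\<chi> k. fps_to_fls (Z k)) =
         (\<chi> i. fps_to_fls (X i)) v* system_matrix A (adj_matrix E node is_in \<beta>) B"
proof -
  define F where "F = adj_matrix E node is_in \<beta>"
  define x where "x = (\<chi> i. fps_to_fls (X i))"
  define y where "y = (\<chi> e. fps_to_fls (Y e))"
  have "y $ e = (delayD *s (y v* F) + x v* A) $ e" for e
    unfolding F_def x_def y_def using dynY[of e] by (simp add: vector_matrix_mult_def mult_ac)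
  then have "y = delayD *s (y v* F) + x v* A"
    by (simp add: vec_eq_iff)
  then have "y v* (mat 1 - mat_scale delayD F) = x v* A"
    unfolding vector_matrix_mult_one_minus_mat_scale by (simp add: algebra_simps)
  moreover have "invertible (mat 1 - mat_scale delayD F)"
    unfolding F_def by (intro invertible_one_minus_fls_X_mat_scale subdegree_adj_matrix_nonneg)
  ultimately have y: "y = (x v* A) v* matrix_inv (mat 1 - mat_scale delayD F)"
    by (intro vector_matrix_mult_matrix_inv_eq)
  have z: "(\<chi> k. fps_to_fls (Z k)) = y v* transpose B"
    using dynZ by (simp add: y_def vec_eq_iff vector_matrix_mult_def transpose_def mult_ac)
  show ?thesis
    unfolding z y system_matrix_def F_def[symmetric] x_def[symmetric]
    by (simp only: vector_matrix_mul_assoc)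
qed

end
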